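(* Let $G$ be a finitely generated group with $\operatorname{Out}(G)$ finite. Then the automorphic growth function of $G$ is equivalent (under $\sim$) to its conjugacy growth function.
   Context: With respect to a finite generating set, the automorphic growth function sends $n$ to the number of $\operatorname{Aut}(G)$-orbits of $G$ containing an element of word length at most $n$, and the conjugacy growth function sends $n$ to the number of conjugacy classes containing an element of word length at most $n$. For non-decreasing non-zero $f,g\colon\mathbb{N}\to\mathbb{N}$, $f\preccurlyeq g$ means there is $\lambda\in\mathbb{N}\setminus\{0\}$ with $f(n)\le\lambda g(\lambda n+\lambda)+\lambda$ for all $n$, and $f\sim g$ means $f\preccurlyeq g$ and $g\preccurlyeq f$. *)

theory Defs
  imports "HOL-Algebra.Algebra"
begin

definition word_length :: "('a, 'b) monoid_scheme \<Rightarrow> 'a set \<Rightarrow> 'a \<Rightarrow> nat" where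
  "word_length G S g = (LEAST k. \<exists>w. length w = k \<and> set w \<subseteq> S \<union> (m_inv G ` S)
      \<and> foldr (\<lambda>a b. a \<otimes>\<^bsub>G\<^esub> b) w \<one>\<^bsub>G\<^esub> = g)"

definition ball_set :: "('a, 'b) monoid_scheme \<Rightarrow> 'a set \<Rightarrow> nat \<Rightarrow> 'a set" where
  "ball_set G S n = {x \<in> carrier G. word_length G S x \<le> n}"

definition conj_class :: "('a, 'b) monoid_scheme \<Rightarrow> 'a \<Rightarrow> 'a set" where
  "conj_class G x = {g \<otimes>\<^bsub>G\<^esub> x \<otimes>\<^bsub>G\<^esub> inv\<^bsub>G\<^esub> g | g. g \<in> carrier G}"

definition aut_orbit :: "('a, 'b) monoid_scheme \<Rightarrow> 'a \<Rightarrow> 'a set" where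
  "aut_orbit G x = {\<phi> x | \<phi>. \<phi> \<in> iso G G}"

definition conj_growth :: "('a, 'b) monoid_scheme \<Rightarrow> 'a set \<Rightarrow> nat \<Rightarrow> nat" where
  "conj_growth G S n = card (conj_class G ` ball_set G S n)"

definition aut_growth :: "('a, 'b) monoid_scheme \<Rightarrow> 'a set \<Rightarrow> nat \<Rightarrow> nat" where
  "aut_growth G S n = card (aut_orbit G ` ball_set G S n)"

definition out_rel :: "('a, 'b) monoid_scheme \<Rightarrow> (('a \<Rightarrow> 'a) \<times> ('a \<Rightarrow> 'a)) set" where
  "out_rel G = {(\<phi>, \<psi>). \<phi> \<in> iso G G \<and> \<psi> \<in> iso G G \<and>
      (\<exists>g \<in> carrier G. \<forall>x \<in> carrier G. \<phi> x = \<psi> (g \<otimes>\<^bsub>G\<^esub> x \<otimes>\<^bsub>G\<^esub> inv\<^bsub>G\<^esub> g))}"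

definition Out_finite :: "('a, 'b) monoid_scheme \<Rightarrow> bool" where
  "Out_finite G \<longleftrightarrow> finite (iso G G // out_rel G)"

definition growth_preceq :: "(nat \<Rightarrow> nat) \<Rightarrow> (nat \<Rightarrow> nat) \<Rightarrow> bool" where
  "growth_preceq f g \<longleftrightarrow> (\<exists>c::nat. c > 0 \<and> (\<forall>n. f n \<le> c * g (c * n + c) + c))"

definition growth_equiv :: "(nat \<Rightarrow> nat) \<Rightarrow> (nat \<Rightarrow> nat) \<Rightarrow> bool" where
  "growth_equiv f g \<longleftrightarrow> growth_preceq f g \<and> growth_preceq g f"

end

theory Submission
  imports Defs
begin

(* Inner automorphisms preserve Aut(G)-orbits, so every orbit is a union of conjugacy classes
   and, in any finite set B, there are at most as many orbits as conjugacy classes.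
   Conversely, if two automorphisms \<psi>, \<phi> differ by an inner automorphism then \<psi> x and \<phi> x are
   conjugate. Fixing a point z of each orbit and one automorphism in each class of Out(G),
   the conjugacy class of any y in the orbit of z is therefore that of \<phi> z for one of the
   |Out(G)| chosen \<phi>; so at most |Out(G)| classes meet B per orbit. On balls both counting
   functions are monotone, and the two comparisons give equivalence with constants 1 and
   |Out(G)|. *)

abbreviation word_prod :: "('a, 'b) monoid_scheme \<Rightarrow> 'a list \<Rightarrow> 'a" where
  "word_prod G w \<equiv> foldr (\<lambda>a b. a \<otimes>\<^bsub>G\<^esub> b) w \<one>\<^bsub>G\<^esub>"

lemma (in group) word_prod_closed: "set w \<subseteq> carrier G \<Longrightarrow> word_prod G w \<in> carrier G"
  by (induction w) auto

lemma (in group) word_prod_append: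
  "set v \<subseteq> carrier G \<Longrightarrow> set w \<subseteq> carrier G \<Longrightarrow> word_prod G (v @ w) = word_prod G v \<otimes> word_prod G w"
  by (induction v) (auto simp: word_prod_closed m_assoc)

lemma (in group) generate_imp_word:
  assumes "S \<subseteq> carrier G" "x \<in> generate G S"
  shows "\<exists>w. set w \<subseteq> S \<union> m_inv G ` S \<and> word_prod G w = x"
  using assms(2)
proof (induction rule: generate.induct)
  case one
  show ?case by (intro exI[of _ "[]"]) auto
next
  case (incl h)
  then show ?case using assms(1) by (intro exI[of _ "[h]"]) auto
next
  case (inv h)
  then show ?case using assms(1) by (intro exI[of _ "[inv h]"]) auto
next
  case (eng h1 h2)
  then obtain v w where "set v \<subseteq> S \<union> m_inv G ` S" "word_prod G v = h1"
    and "set w \<subseteq> S \<union> m_inv G ` S" "word_prod G w = h2" by blast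
  moreover have "S \<union> m_inv G ` S \<subseteq> carrier G" using assms(1) by auto
  ultimately show ?case using word_prod_append[of v w] by (intro exI[of _ "v @ w"]) auto
qed

lemma (in group) word_length_attained:
  assumes "S \<subseteq> carrier G" "x \<in> generate G S"
  shows "\<exists>w. length w = word_length G S x \<and> set w \<subseteq> S \<union> m_inv G ` S \<and> word_prod G w = x"
proof -
  have "\<exists>k w. length w = k \<and> set w \<subseteq> S \<union> m_inv G ` S \<and> word_prod G w = x"
    using generate_imp_word[OF assms] by blast
  then show ?thesis unfolding word_length_def by (rule LeastI_ex)
qed

lemma (in group) finite_ball_set:
  assumes "finite S" "S \<subseteq> carrier G" "generate G S = carrier G"
  shows "finite (ball_set G S n)"
proof (rule finite_subset)
  show "ball_set G S n \<subseteq> word_prod G ` {w. set w \<subseteq> S \<union> m_inv G ` S \<and> length w \<le> n}"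
    using word_length_attained[OF assms(2)] assms(3) by (fastforce simp: ball_set_def)
  show "finite (word_prod G ` {w. set w \<subseteq> S \<union> m_inv G ` S \<and> length w \<le> n})"
    using assms(1) by (intro finite_imageI finite_lists_length_le) auto
qed

lemma (in group) mono_card_image_ball_set:
  assumes "finite S" "S \<subseteq> carrier G" "generate G S = carrier G"
  shows "mono (\<lambda>n. card (f ` ball_set G S n))"
proof (rule monoI)
  fix m n :: nat
  assume "m \<le> n"
  then have "ball_set G S m \<subseteq> ball_set G S n" by (auto simp: ball_set_def)
  then show "card (f ` ball_set G S m) \<le> card (f ` ball_set G S n)"
    using finite_ball_set[OF assms] by (intro card_mono image_mono) auto
qed

lemma growth_preceq_if_le_mult:
  assumes "mono g" "\<And>n. f n \<le> c * g n"
  shows "growth_preceq f g"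
  unfolding growth_preceq_def
proof (intro exI[of _ "c + 1"] conjI allI)
  fix n
  have "f n \<le> c * g n" by (rule assms(2))
  also have "\<dots> \<le> (c + 1) * g ((c + 1) * n + (c + 1))"
    by (intro mult_mono monoD[OF assms(1)]) auto
  finally show "f n \<le> (c + 1) * g ((c + 1) * n + (c + 1)) + (c + 1)" by linarith
qed simp

lemma (in group) inv_mult_cancel [simp]:
  "x \<in> carrier G \<Longrightarrow> y \<in> carrier G \<Longrightarrow> inv x \<otimes> (x \<otimes> y) = y"
  by (simp add: m_assoc[symmetric])

lemma (in group) mult_inv_cancel [simp]:
  "x \<in> carrier G \<Longrightarrow> y \<in> carrier G \<Longrightarrow> x \<otimes> (inv x \<otimes> y) = y"
  by (simp add: m_assoc[symmetric])

lemma (in group) inner_automorphism_iso: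
  assumes "g \<in> carrier G"
  shows "(\<lambda>x. g \<otimes> x \<otimes> inv g) \<in> iso G G"
proof -
  have "(\<lambda>x. g \<otimes> x \<otimes> inv g) \<in> hom G G"
    unfolding hom_def using assms by (auto simp: m_assoc)
  moreover have "bij_betw (\<lambda>x. g \<otimes> x \<otimes> inv g) (carrier G) (carrier G)"
    by (rule bij_betw_byWitness[where f'="\<lambda>x. inv g \<otimes> x \<otimes> g"])
      (use assms in \<open>auto simp: m_assoc\<close>)
  ultimately show ?thesis by (simp add: iso_def)
qed

lemma (in group) conj_class_conj:
  assumes "h \<in> carrier G" "y \<in> carrier G"
  shows "conj_class G (h \<otimes> y \<otimes> inv h) = conj_class G y"
proof -
  have "g \<otimes> (h \<otimes> y \<otimes> inv h) \<otimes> inv g = (g \<otimes> h) \<otimes> y \<otimes> inv (g \<otimes> h)"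
    and "g \<otimes> y \<otimes> inv g = (g \<otimes> inv h) \<otimes> (h \<otimes> y \<otimes> inv h) \<otimes> inv (g \<otimes> inv h)"
    if "g \<in> carrier G" for g
    using that assms by (simp_all add: m_assoc inv_mult_group)
  then show ?thesis
    unfolding conj_class_def using assms by (blast intro: m_closed inv_closed)
qed

lemma mem_aut_orbit_self: "y \<in> aut_orbit G y"
  using iso_set_refl unfolding aut_orbit_def by fastforce

lemma (in group) aut_orbit_subset_carrier: "y \<in> carrier G \<Longrightarrow> aut_orbit G y \<subseteq> carrier G"
  unfolding aut_orbit_def iso_def hom_def by auto

lemma (in group) aut_orbit_iso:
  assumes "\<psi> \<in> iso G G" "y \<in> carrier G"
  shows "aut_orbit G (\<psi> y) = aut_orbit G y"
proof -
  let ?\<psi>' = "inv_into (carrier G) \<psi>"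
  have "?\<psi>' (\<psi> y) = y"
    using assms by (simp add: iso_def bij_betw_def)
  then have "\<phi> y = (\<phi> \<circ> ?\<psi>') (\<psi> y)" for \<phi> by simp
  moreover have "\<phi> \<circ> \<psi> \<in> iso G G" "\<phi> \<circ> ?\<psi>' \<in> iso G G" if "\<phi> \<in> iso G G" for \<phi>
    using iso_set_trans[OF assms(1) that] iso_set_trans[OF iso_set_sym[OF assms(1)] that] by auto
  ultimately show ?thesis
    unfolding aut_orbit_def by (auto simp del: comp_apply) (metis comp_apply)+
qed

lemma (in group) aut_orbit_eq_if_mem_aut_orbit:
  assumes "x \<in> aut_orbit G y" "y \<in> carrier G"
  shows "aut_orbit G x = aut_orbit G y"
  using assms aut_orbit_iso unfolding aut_orbit_def by blast

lemma (in group) aut_orbit_eq_if_mem_conj_class: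
  assumes "x \<in> conj_class G y" "y \<in> carrier G"
  shows "aut_orbit G x = aut_orbit G y"
  using assms aut_orbit_iso[OF inner_automorphism_iso] unfolding conj_class_def by blast

lemma (in group) mem_conj_class_self: "y \<in> carrier G \<Longrightarrow> y \<in> conj_class G y"
  unfolding conj_class_def by (auto intro!: exI[of _ \<one>])

lemma (in group) out_rel_refl: "\<phi> \<in> iso G G \<Longrightarrow> (\<phi>, \<phi>) \<in> out_rel G"
  unfolding out_rel_def by (auto intro!: bexI[of _ \<one>])

lemma (in group) conj_class_eq_if_out_rel:
  assumes "(\<psi>, \<phi>) \<in> out_rel G" "x \<in> carrier G"
  shows "conj_class G (\<psi> x) = conj_class G (\<phi> x)"
proof -
  obtain g where g: "g \<in> carrier G" and \<psi>: "\<psi> x = \<phi> (g \<otimes> x \<otimes> inv g)"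
    using assms unfolding out_rel_def by blast
  interpret \<phi>: group_hom G G \<phi>
    using assms(1) by (simp add: out_rel_def group_hom_def group_hom_axioms_def iso_def is_group)
  have "\<psi> x = \<phi> g \<otimes> \<phi> x \<otimes> inv (\<phi> g)"
    using \<psi> g assms(2) by simp
  then show ?thesis using g assms(2) by (simp add: conj_class_conj)
qed

lemma (in group) card_aut_orbits_le_card_conj_classes:
  assumes "finite B" "B \<subseteq> carrier G"
  shows "card (aut_orbit G ` B) \<le> card (conj_class G ` B)"
proof (rule surj_card_le)
  show "finite (conj_class G ` B)" using assms(1) by simp
  show "aut_orbit G ` B \<subseteq> (\<lambda>C. aut_orbit G (SOME x. x \<in> C)) ` conj_class G ` B"
  proof
    fix Orb assume "Orb \<in> aut_orbit G ` B"
    then obtain y where y: "y \<in> B" "Orb = aut_orbit G y" by blast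
    with assms(2) have "(SOME x. x \<in> conj_class G y) \<in> conj_class G y"
      by (meson someI mem_conj_class_self subsetD)
    then have "aut_orbit G (SOME x. x \<in> conj_class G y) = Orb"
      using y assms(2) aut_orbit_eq_if_mem_conj_class by blast
    then show "Orb \<in> (\<lambda>C. aut_orbit G (SOME x. x \<in> C)) ` conj_class G ` B"
      using y(1) by blast
  qed
qed

lemma (in group) card_conj_classes_le_card_aut_orbits_mult_card_Out:
  assumes "finite B" "B \<subseteq> carrier G" "finite (iso G G // out_rel G)"
  shows "card (conj_class G ` B) \<le> card (aut_orbit G ` B) * card (iso G G // out_rel G)"
proof -
  let ?h = "\<lambda>(Orb, Q). conj_class G ((SOME \<phi>. \<phi> \<in> Q) (SOME z. z \<in> Orb))"
  have "conj_class G ` B \<subseteq> ?h ` (aut_orbit G ` B \<times> iso G G // out_rel G)"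
  proof
    fix C assume "C \<in> conj_class G ` B"
    then obtain y where y: "y \<in> B" "C = conj_class G y" by blast
    with assms(2) have y_carrier: "y \<in> carrier G" by blast
    define z where "z = (SOME z. z \<in> aut_orbit G y)"
    have z: "z \<in> aut_orbit G y"
      unfolding z_def by (rule someI[where P = "\<lambda>z. z \<in> aut_orbit G y", OF mem_aut_orbit_self])
    have z_carrier: "z \<in> carrier G"
      using aut_orbit_subset_carrier[OF y_carrier] z by (rule subsetD)
    have "y \<in> aut_orbit G z"
      using aut_orbit_eq_if_mem_aut_orbit[OF z y_carrier] mem_aut_orbit_self[of y G] by simp
    then obtain \<psi> where \<psi>: "\<psi> \<in> iso G G" "y = \<psi> z"
      unfolding aut_orbit_def by blast
    define Q where "Q = out_rel G `` {\<psi>}"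
    have "\<psi> \<in> Q"
      unfolding Q_def using out_rel_refl[OF \<psi>(1)] by simp
    then have "(SOME \<phi>. \<phi> \<in> Q) \<in> Q" by (rule someI[where P = "\<lambda>\<phi>. \<phi> \<in> Q"])
    then have "(\<psi>, SOME \<phi>. \<phi> \<in> Q) \<in> out_rel G"
      unfolding Q_def by simp
    then have "conj_class G (\<psi> z) = conj_class G ((SOME \<phi>. \<phi> \<in> Q) z)"
      using z_carrier by (rule conj_class_eq_if_out_rel)
    moreover have "?h (aut_orbit G y, Q) = conj_class G ((SOME \<phi>. \<phi> \<in> Q) z)"
      by (simp add: z_def)
    ultimately have "C = ?h (aut_orbit G y, Q)"
      using y(2) \<psi>(2) by simp
    moreover have "Q \<in> iso G G // out_rel G"
      unfolding Q_def using \<psi>(1) by (rule quotientI)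
    ultimately show "C \<in> ?h ` (aut_orbit G ` B \<times> iso G G // out_rel G)"
      using y(1) by blast
  qed
  then have "card (conj_class G ` B) \<le> card (aut_orbit G ` B \<times> iso G G // out_rel G)"
    using assms(1,3) by (intro surj_card_le) auto
  then show ?thesis by (simp add: card_cartesian_product)
qed

theorem mainTheorem17:
  fixes G :: "('a, 'b) monoid_scheme" and S :: "'a set"
  assumes "group G"
    and "finite S" and "S \<subseteq> carrier G" and "generate G S = carrier G"
    and "Out_finite G"
  shows "growth_equiv (aut_growth G S) (conj_growth G S)"
proof -
  interpret group G by fact
  have ball: "finite (ball_set G S n)" "ball_set G S n \<subseteq> carrier G" for n
    using finite_ball_set[OF assms(2-4)] by (auto simp: ball_set_def)
  have "aut_growth G S n \<le> 1 * conj_growth G S n" for n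
    unfolding aut_growth_def conj_growth_def
    using card_aut_orbits_le_card_conj_classes[OF ball] by simp
  moreover have "conj_growth G S n \<le> card (iso G G // out_rel G) * aut_growth G S n" for n
    unfolding aut_growth_def conj_growth_def
    using card_conj_classes_le_card_aut_orbits_mult_card_Out[OF ball] assms(5)
    by (simp add: Out_finite_def mult.commute)
  moreover have "mono (conj_growth G S)" "mono (aut_growth G S)"
    unfolding conj_growth_def aut_growth_def
    using mono_card_image_ball_set[OF assms(2-4)] by auto
  ultimately show ?thesis
    unfolding growth_equiv_def by (metis growth_preceq_if_le_mult)
qed

end
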